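(* Let $(x^k,\lambda^k)_{k\ge0}$ be generated by the proximal ADMM applied to (P). Suppose Assumption (A2) holds on a compact set $S$ with constants $M_f,L_f,C_\varphi,M_\varphi,L_\varphi$, and that $x^{k+1}\in S$ for some $k\ge0$. Then for every $i=0,\dots,n-1$, $$\|\lambda_i^{k+1}\|\le\frac{1-M_\varphi^{n-i}}{1-M_\varphi}M_f+\sum_{j=i}^{n-2}\rho_{j+1}M_\varphi^{j+1-i}\|x_{j+2}^{k+1}-x_{j+2}^k\|+\sum_{j=i}^{n-1}\frac{M_\varphi^{j-i}}{\eta_{j+1}}\|x_{j+1}^{k+1}-x_{j+1}^k\|,$$ equivalently $$\|\lambda_i^{k+1}\|\le\frac{1-M_\varphi^{n-i}}{1-M_\varphi}M_f+\sum_{j=i}^{n-1}B_{j,i}\|x_{j+1}^{k+1}-x_{j+1}^k\|,$$ where $B_{j,i}=\rho_jM_\varphi^{j-i}+\frac{M_\varphi^{j-i}}{\eta_{j+1}}$ for $j>i$ and $B_{i,i}=\frac{1}{\eta_{i+1}}$.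
   Context: Let $n,d\ge1$, and let $f_0,\dots,f_n:\mathbb{R}^d\to\mathbb{R}$ and $\varphi:\mathbb{R}^d\to\mathbb{R}^d$ be continuously differentiable; $\nabla\varphi$ denotes the Jacobian matrix and $\|\cdot\|$ the Euclidean norm / induced matrix 2-norm. Problem (P): minimize $\sum_{i=0}^n f_i(x_i)$ over $x=(x_0,\dots,x_n)\in(\mathbb{R}^d)^{n+1}$ subject to $x_{j+1}=\varphi(x_j)$, $j=0,\dots,n-1$. For penalty parameters $\rho_0,\dots,\rho_{n-1}>0$ and $\lambda=(\lambda_0,\dots,\lambda_{n-1})\in(\mathbb{R}^d)^n$, the augmented Lagrangian is $L_\rho(x,\lambda)=\sum_{i=0}^n f_i(x_i)+\sum_{i=0}^{n-1}\big(\langle\lambda_i,x_{i+1}-\varphi(x_i)\rangle+\frac{\rho_i}{2}\|x_{i+1}-\varphi(x_i)\|^2\big)$. Proximal ADMM: given $\eta_0,\dots,\eta_n>0$ and an initial point $(x^0,\lambda^0)$, for $k=0,1,\dots$, for $i=0,1,\dots,n$ in this order, $x_i^{k+1}$ is a (global) minimizer over $x_i$ of $L_\rho(x_0^{k+1},\dots,x_{i-1}^{k+1},x_i,x_{i+1}^k,\dots,x_n^k,\lambda^k)+\frac{1}{2\eta_i}\|x_i-x_i^k\|^2$ (assumed to exist), then $\lambda_j^{k+1}=\lambda_j^k+\rho_j(x_{j+1}^{k+1}-\varphi(x_j^{k+1}))$, $j=0,\dots,n-1$. Assumption (A2) on a compact set $S\subset(\mathbb{R}^d)^{n+1}$: there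 are constants $M_f,L_f,C_\varphi,M_\varphi,L_\varphi>0$ such that for all $x=(x_0,\dots,x_n),y=(y_0,\dots,y_n)\in S$ and all $i=0,\dots,n$: $\|\nabla f_i(x_i)\|\le M_f$, $\|\nabla f_i(x_i)-\nabla f_i(y_i)\|\le L_f\|x_i-y_i\|$, $\|\varphi(x_i)\|\le C_\varphi$, $\|\nabla\varphi(x_i)\|\le M_\varphi$, $\|\nabla\varphi(x_i)-\nabla\varphi(y_i)\|\le L_\varphi\|x_i-y_i\|$. Quotients of the form $\frac{M_\varphi^a-M_\varphi^b}{1-M_\varphi}$ ($a\le b$) denote $\sum_{l=a}^{b-1}M_\varphi^l$ (in particular when $M_\varphi=1$). *)

theory Defs
  imports "HOL-Analysis.Analysis"
begin

text \<open>Points x = (x_0,...,x_n) of (R^d)^(n+1) are functions nat => 'a (only indices <= n matter).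
  Augmented Lagrangian L_rho(x, lambda).\<close>
definition aug_lagr ::
  "nat \<Rightarrow> (nat \<Rightarrow> 'a::euclidean_space \<Rightarrow> real) \<Rightarrow> ('a \<Rightarrow> 'a) \<Rightarrow> (nat \<Rightarrow> real)
    \<Rightarrow> (nat \<Rightarrow> 'a) \<Rightarrow> (nat \<Rightarrow> 'a) \<Rightarrow> real" where
  "aug_lagr n f \<phi> \<rho> x lam =
     (\<Sum>i\<le>n. f i (x i)) +
     (\<Sum>i<n. inner (lam i) (x (Suc i) - \<phi> (x i)) + \<rho> i / 2 * (norm (x (Suc i) - \<phi> (x i)))\<^sup>2)"

text \<open>x k i = x_i^k, lam k j = lambda_j^k generated by the proximal ADMM (Gauss-Seidel sweep
  i = 0,...,n, each x_i^{k+1} a global minimizer, then the multiplier update).\<close>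
definition prox_admm ::
  "nat \<Rightarrow> (nat \<Rightarrow> 'a::euclidean_space \<Rightarrow> real) \<Rightarrow> ('a \<Rightarrow> 'a) \<Rightarrow> (nat \<Rightarrow> real) \<Rightarrow> (nat \<Rightarrow> real)
    \<Rightarrow> (nat \<Rightarrow> nat \<Rightarrow> 'a) \<Rightarrow> (nat \<Rightarrow> nat \<Rightarrow> 'a) \<Rightarrow> bool" where
  "prox_admm n f \<phi> \<rho> \<eta> x lam \<longleftrightarrow>
     (\<forall>k. \<forall>i\<le>n. \<forall>y.
        aug_lagr n f \<phi> \<rho> (\<lambda>j. if j < i then x (Suc k) j else if j = i then x (Suc k) i else x k j) (lam k)
          + 1 / (2 * \<eta> i) * (norm (x (Suc k) i - x k i))\<^sup>2
        \<le> aug_lagr n f \<phi> \<rho> (\<lambda>j. if j < i then x (Suc k) j else if j = i then y else x k j) (lam k)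
          + 1 / (2 * \<eta> i) * (norm (y - x k i))\<^sup>2) \<and>
     (\<forall>k. \<forall>j<n. lam (Suc k) j = lam k j + \<rho> j *\<^sub>R (x (Suc k) (Suc j) - \<phi> (x (Suc k) j)))"

end

theory Submission
  imports Defs
begin

(* For i \<ge> 1 the block x_i^{k+1} minimizes a smooth function of x_i, so the derivative vanishes there.
   After substituting the multiplier update, this first-order condition reads
     lam_{i-1}^{k+1} = - grad f_i(x_i^{k+1}) - (x_i^{k+1} - x_i^k) / eta_i
                       + D phi(x_i^{k+1})^T (lam_i^{k+1} - rho_i (x_{i+1}^{k+1} - x_{i+1}^k)),
   the last term being absent for i = n. Taking norms gives a backward recursion
   |lam_{i-1}^{k+1}| \<le> M_f + |x_i^{k+1} - x_i^k| / eta_i + M_phi (|lam_i^{k+1}| + rho_i |x_{i+1}^{k+1} - x_{i+1}^k|),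
   which unrolls backward from i = n into the stated bound. *)

lemma has_derivative_fun_upd_component:
  assumes "j = i \<Longrightarrow> (g has_derivative g') (at y0)"
  shows "((\<lambda>y. g ((z(i := y)) j)) has_derivative (\<lambda>h. if j = i then g' h else 0)) (at y0)"
  using assms by (cases "j = i") simp_all

lemma has_derivative_inner_plus_half_sq_norm:
  fixes r :: "'a::real_normed_vector \<Rightarrow> 'b::real_inner"
  assumes "(r has_derivative r') (at y0)"
  shows "((\<lambda>y. inner L (r y) + c / 2 * (norm (r y))\<^sup>2) has_derivative
    (\<lambda>h. inner (L + c *\<^sub>R r y0) (r' h))) (at y0)"
proof -
  have "((\<lambda>y. inner L (r y) + c / 2 * inner (r y) (r y)) has_derivative
      (\<lambda>h. (inner L (r' h) + inner 0 (r y0)) + c / 2 * (inner (r y0) (r' h) + inner (r' h) (r y0)))) (at y0)"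
    by (intro has_derivative_add has_derivative_mult_right has_derivative_inner assms has_derivative_const)
  then show ?thesis
    by (simp add: power2_norm_eq_inner inner_add_left inner_commute algebra_simps)
qed

lemma has_derivative_aug_lagr_component:
  fixes f :: "nat \<Rightarrow> 'a::euclidean_space \<Rightarrow> real" and \<phi> :: "'a \<Rightarrow> 'a"
  assumes i: "0 < i" "i \<le> n"
    and grad: "(f i has_derivative (\<lambda>h. inner g h)) (at y0)"
    and deriv: "(\<phi> has_derivative D) (at y0)"
  shows "((\<lambda>y. aug_lagr n f \<phi> \<rho> (z(i := y)) lam) has_derivative
    (\<lambda>h. inner g h + inner (lam (i - 1) + \<rho> (i - 1) *\<^sub>R (y0 - \<phi> (z (i - 1)))) h
       - (if i < n then inner (lam i + \<rho> i *\<^sub>R (z (Suc i) - \<phi> y0)) (D h) else 0))) (at y0)"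
proof -
  let ?z = "\<lambda>y. z(i := y)"
  define W where "W j = lam j + \<rho> j *\<^sub>R (?z y0 (Suc j) - \<phi> (?z y0 j))" for j
  have objective: "((\<lambda>y. \<Sum>j\<le>n. f j (?z y j)) has_derivative
      (\<lambda>h. \<Sum>j\<le>n. if j = i then inner g h else 0)) (at y0)" (is "(_ has_derivative ?dobj) _")
    by (intro has_derivative_sum has_derivative_fun_upd_component) (use grad in simp)
  have penalty: "((\<lambda>y. \<Sum>j<n. inner (lam j) (?z y (Suc j) - \<phi> (?z y j))
        + \<rho> j / 2 * (norm (?z y (Suc j) - \<phi> (?z y j)))\<^sup>2) has_derivative
      (\<lambda>h. \<Sum>j<n. inner (W j) ((if Suc j = i then h else 0) - (if j = i then D h else 0)))) (at y0)"
    (is "(_ has_derivative ?dpen) _")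
    unfolding W_def
    by (intro has_derivative_sum has_derivative_inner_plus_half_sq_norm has_derivative_diff
        has_derivative_fun_upd_component[of _ _ "\<lambda>y. y" "\<lambda>h. h"]
        has_derivative_fun_upd_component[of _ _ \<phi> D] has_derivative_ident deriv)
  have penalty_sum: "(\<Sum>j<n. inner (W j) ((if Suc j = i then h else 0) - (if j = i then D h else 0)))
      = inner (W (i - 1)) h - (if i < n then inner (W i) (D h) else 0)" for h
  proof -
    have "(\<Sum>j<n. inner (W j) (if Suc j = i then h else 0)) = (\<Sum>j<n. if j = i - 1 then inner (W j) h else 0)"
      using i by (intro sum.cong) auto
    moreover have "(\<Sum>j<n. inner (W j) (if j = i then D h else 0)) = (\<Sum>j<n. if j = i then inner (W j) (D h) else 0)"
      by (intro sum.cong) auto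
    ultimately show ?thesis
      using i by (simp add: inner_diff_right sum_subtractf sum.delta)
  qed
  have W_prev: "W (i - 1) = lam (i - 1) + \<rho> (i - 1) *\<^sub>R (y0 - \<phi> (z (i - 1)))"
    and W_cur: "W i = lam i + \<rho> i *\<^sub>R (z (Suc i) - \<phi> y0)"
    using i by (auto simp: W_def)
  have "(\<lambda>h. ?dobj h + ?dpen h) = (\<lambda>h. inner g h
      + inner (lam (i - 1) + \<rho> (i - 1) *\<^sub>R (y0 - \<phi> (z (i - 1)))) h
      - (if i < n then inner (lam i + \<rho> i *\<^sub>R (z (Suc i) - \<phi> y0)) (D h) else 0))"
    unfolding penalty_sum W_prev W_cur using i by (simp add: sum.delta add_diff_eq)
  moreover have "((\<lambda>y. aug_lagr n f \<phi> \<rho> (?z y) lam) has_derivative (\<lambda>h. ?dobj h + ?dpen h)) (at y0)"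
    unfolding aug_lagr_def by (rule has_derivative_add[OF objective penalty])
  ultimately show ?thesis
    by simp
qed

lemma prox_admm_stationarity:
  fixes f :: "nat \<Rightarrow> 'a::euclidean_space \<Rightarrow> real" and \<phi> :: "'a \<Rightarrow> 'a"
  assumes admm: "prox_admm n f \<phi> \<rho> \<eta> x lam"
    and i: "0 < i" "i \<le> n"
    and grad: "(f i has_derivative (\<lambda>h. inner g h)) (at (x (Suc k) i))"
    and deriv: "(\<phi> has_derivative D) (at (x (Suc k) i))"
  shows "inner (lam (Suc k) (i - 1)) h =
    (if i < n then inner (lam (Suc k) i - \<rho> i *\<^sub>R (x (Suc k) (Suc i) - x k (Suc i))) (D h) else 0)
    - inner g h - inner (x (Suc k) i - x k i) h / \<eta> i"
proof -
  define y0 where "y0 = x (Suc k) i"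
  define z where "z j = (if j < i then x (Suc k) j else x k j)" for j
  define F where "F y = aug_lagr n f \<phi> \<rho> (z(i := y)) (lam k) + 1 / (2 * \<eta> i) * (norm (y - x k i))\<^sup>2"
    for y
  have point: "(\<lambda>j. if j < i then x (Suc k) j else if j = i then y else x k j) = z(i := y)" for y
    by (auto simp: z_def)
  have minimal: "\<forall>y\<in>UNIV. F y0 \<le> F y"
  proof
    fix y
    have "aug_lagr n f \<phi> \<rho> (\<lambda>j. if j < i then x (Suc k) j else if j = i then x (Suc k) i else x k j) (lam k)
        + 1 / (2 * \<eta> i) * (norm (x (Suc k) i - x k i))\<^sup>2
      \<le> aug_lagr n f \<phi> \<rho> (\<lambda>j. if j < i then x (Suc k) j else if j = i then y else x k j) (lam k)
        + 1 / (2 * \<eta> i) * (norm (y - x k i))\<^sup>2"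
      using admm i unfolding prox_admm_def by blast
    then show "F y0 \<le> F y"
      unfolding F_def y0_def point .
  qed
  have prox: "((\<lambda>y. 1 / (2 * \<eta> i) * (norm (y - x k i))\<^sup>2) has_derivative
      (\<lambda>h. inner (y0 - x k i) h / \<eta> i)) (at y0)"
  proof -
    have "((\<lambda>y. 1 / (2 * \<eta> i) * inner (y - x k i) (y - x k i)) has_derivative
        (\<lambda>h. 1 / (2 * \<eta> i) * (inner (y0 - x k i) (h - 0) + inner (h - 0) (y0 - x k i)))) (at y0)"
      by (intro has_derivative_mult_right has_derivative_inner has_derivative_diff
          has_derivative_ident has_derivative_const)
    then show ?thesis
      by (simp add: power2_norm_eq_inner inner_commute)
  qed
  have "(F has_derivative (\<lambda>h. inner g h
      + inner (lam k (i - 1) + \<rho> (i - 1) *\<^sub>R (y0 - \<phi> (z (i - 1)))) h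
      - (if i < n then inner (lam k i + \<rho> i *\<^sub>R (z (Suc i) - \<phi> y0)) (D h) else 0)
      + inner (y0 - x k i) h / \<eta> i)) (at y0)" (is "(F has_derivative ?dF) _")
    unfolding F_def
    by (intro has_derivative_add has_derivative_aug_lagr_component prox i)
      (use grad deriv in \<open>simp_all add: y0_def\<close>)
  then have "?dF = (\<lambda>h. 0)"
    using differential_zero_maxmin[OF UNIV_I open_UNIV] minimal by blast
  then have Fermat: "inner g h + inner (lam k (i - 1) + \<rho> (i - 1) *\<^sub>R (y0 - \<phi> (z (i - 1)))) h
      - (if i < n then inner (lam k i + \<rho> i *\<^sub>R (z (Suc i) - \<phi> y0)) (D h) else 0)
      + inner (y0 - x k i) h / \<eta> i = 0"
    by (rule fun_cong)
  have "lam (Suc k) (i - 1) = lam k (i - 1) + \<rho> (i - 1) *\<^sub>R (y0 - \<phi> (z (i - 1)))"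
    using admm i unfolding prox_admm_def y0_def z_def by auto
  moreover have "i < n \<Longrightarrow>
      lam k i + \<rho> i *\<^sub>R (z (Suc i) - \<phi> y0) = lam (Suc k) i - \<rho> i *\<^sub>R (x (Suc k) (Suc i) - x k (Suc i))"
    using admm unfolding prox_admm_def y0_def z_def by (auto simp: algebra_simps)
  ultimately show ?thesis
    using Fermat unfolding y0_def by (auto split: if_splits)
qed

lemma norm_le_if_inner_le:
  fixes v :: "'a::real_inner"
  assumes "\<And>h. inner v h \<le> K * norm h" and "0 \<le> K"
  shows "norm v \<le> K"
proof (cases "v = 0")
  case False
  have "norm v * norm v \<le> K * norm v"
    using assms(1)[of v] by (simp add: power2_norm_eq_inner[symmetric] power2_eq_square)
  with False show ?thesis
    by simp
qed (use assms in simp)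

lemma prox_admm_multiplier_step:
  fixes f :: "nat \<Rightarrow> 'a::euclidean_space \<Rightarrow> real" and \<phi> :: "'a \<Rightarrow> 'a"
  assumes admm: "prox_admm n f \<phi> \<rho> \<eta> x lam"
    and i: "0 < i" "i \<le> n"
    and grad: "(f i has_derivative (\<lambda>h. inner g h)) (at (x (Suc k) i))"
    and deriv: "(\<phi> has_derivative blinfun_apply D) (at (x (Suc k) i))"
    and g_bound: "norm g \<le> Mf" and D_bound: "norm D \<le> M"
    and \<eta>_pos: "0 < \<eta> i" and \<rho>_nonneg: "i < n \<Longrightarrow> 0 \<le> \<rho> i"
  shows "norm (lam (Suc k) (i - 1)) \<le> Mf + norm (x (Suc k) i - x k i) / \<eta> i
    + (if i < n then M * (norm (lam (Suc k) i) + \<rho> i * norm (x (Suc k) (Suc i) - x k (Suc i))) else 0)"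
    (is "_ \<le> Mf + ?prox + ?next")
proof (rule norm_le_if_inner_le)
  \<comment> \<open>Testing the first-order condition against h avoids forming the adjoint of D.\<close>
  fix h
  let ?w = "lam (Suc k) i - \<rho> i *\<^sub>R (x (Suc k) (Suc i) - x k (Suc i))"
  have "\<bar>inner ?w (D h)\<bar> \<le> M * (norm (lam (Suc k) i) + \<rho> i * norm (x (Suc k) (Suc i) - x k (Suc i))) * norm h"
    if "i < n"
  proof -
    have "\<bar>inner ?w (D h)\<bar> \<le> norm ?w * norm (D h)"
      by (rule Cauchy_Schwarz_ineq2)
    also have "\<dots> \<le> (norm (lam (Suc k) i) + \<rho> i * norm (x (Suc k) (Suc i) - x k (Suc i))) * (M * norm h)"
    proof (rule mult_mono)
      show "norm ?w \<le> norm (lam (Suc k) i) + \<rho> i * norm (x (Suc k) (Suc i) - x k (Suc i))"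
        using norm_triangle_ineq4[of "lam (Suc k) i" "\<rho> i *\<^sub>R (x (Suc k) (Suc i) - x k (Suc i))"]
          \<rho>_nonneg[OF that] by simp
      show "norm (D h) \<le> M * norm h"
        using norm_blinfun[of D h] D_bound by (meson mult_right_mono norm_ge_zero order_trans)
    qed (use \<rho>_nonneg[OF that] in simp_all)
    finally show ?thesis
      by (simp add: algebra_simps)
  qed
  then have "(if i < n then inner ?w (D h) else 0) \<le> ?next * norm h"
    by auto
  moreover have "- inner g h \<le> Mf * norm h"
    using Cauchy_Schwarz_ineq2[of g h] mult_right_mono[OF g_bound norm_ge_zero, of h] by linarith
  moreover have "- inner (x (Suc k) i - x k i) h / \<eta> i \<le> ?prox * norm h"
  proof -
    have "- inner (x (Suc k) i - x k i) h \<le> norm (x (Suc k) i - x k i) * norm h"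
      using Cauchy_Schwarz_ineq2[of "x (Suc k) i - x k i" h] by linarith
    from divide_right_mono[OF this less_imp_le[OF \<eta>_pos]] show ?thesis
      by simp
  qed
  ultimately show "inner (lam (Suc k) (i - 1)) h \<le> (Mf + ?prox + ?next) * norm h"
    unfolding prox_admm_stationarity[OF admm i grad deriv] distrib_right by linarith
next
  have "0 \<le> Mf" "0 \<le> M"
    using g_bound D_bound norm_ge_zero order_trans by blast+
  then show "0 \<le> Mf + ?prox + ?next"
    using \<eta>_pos \<rho>_nonneg by simp
qed

lemma backward_recurrence_bound:
  fixes u c :: "nat \<Rightarrow> real"
  assumes rec: "\<And>m. m < N \<Longrightarrow> u m \<le> c m + M * u (Suc m)" and "0 \<le> M" and "i \<le> N"
  shows "u i \<le> (\<Sum>j\<in>{i..<N}. M ^ (j - i) * c j) + M ^ (N - i) * u N"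
  using \<open>i \<le> N\<close>
proof (induction i rule: inc_induct)
  case (step m)
  have shift: "M * (\<Sum>j\<in>{Suc m..<N}. M ^ (j - Suc m) * c j) = (\<Sum>j\<in>{Suc m..<N}. M ^ (j - m) * c j)"
    unfolding sum_distrib_left
  proof (intro sum.cong refl)
    fix j
    assume "j \<in> {Suc m..<N}"
    then have "j - m = Suc (j - Suc m)"
      by auto
    then show "M * (M ^ (j - Suc m) * c j) = M ^ (j - m) * c j"
      by simp
  qed
  have "u m \<le> c m + M * u (Suc m)"
    using rec step.hyps(2) .
  also have "\<dots> \<le> c m + M * ((\<Sum>j\<in>{Suc m..<N}. M ^ (j - Suc m) * c j) + M ^ (N - Suc m) * u N)"
    using step.IH \<open>0 \<le> M\<close> by (simp add: mult_left_mono)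
  also have "\<dots> = (\<Sum>j\<in>{m..<N}. M ^ (j - m) * c j) + M ^ (N - m) * u N"
  proof -
    have "N - m = Suc (N - Suc m)"
      using step.hyps(2) by auto
    then show ?thesis
      using step.hyps(2) by (simp add: distrib_left shift sum.atLeast_Suc_lessThan)
  qed
  finally show ?case .
qed simp

lemma sum_backward_weights_split:
  fixes M Mf :: real and a e r :: "nat \<Rightarrow> real"
  shows "(\<Sum>j\<in>{i..<n}. M ^ (j - i) * (Mf + a (Suc j) / e (Suc j)
      + (if Suc j < n then M * (r (Suc j) * a (Suc (Suc j))) else 0)))
    = (\<Sum>l<n - i. M ^ l) * Mf + (\<Sum>j\<in>{i..<n - 1}. r (j + 1) * M ^ (j + 1 - i) * a (j + 2))
      + (\<Sum>j\<in>{i..<n}. M ^ (j - i) / e (j + 1) * a (j + 1))"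
proof -
  have geometric: "(\<Sum>j\<in>{i..<n}. M ^ (j - i) * Mf) = (\<Sum>l<n - i. M ^ l) * Mf"
    by (simp add: sum_distrib_right[symmetric] sum.atLeastLessThan_shift_0 atLeast0LessThan)
  have "(\<Sum>j\<in>{i..<n}. M ^ (j - i) * (if Suc j < n then M * (r (Suc j) * a (Suc (Suc j))) else 0))
      = (\<Sum>j\<in>{j \<in> {i..<n}. Suc j < n}. M ^ (j - i) * (M * (r (Suc j) * a (Suc (Suc j)))))"
    unfolding sum.inter_filter[OF finite_atLeastLessThan] by (intro sum.cong) auto
  also have "{j \<in> {i..<n}. Suc j < n} = {i..<n - 1}"
    by auto
  also have "(\<Sum>j\<in>{i..<n - 1}. M ^ (j - i) * (M * (r (Suc j) * a (Suc (Suc j)))))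
      = (\<Sum>j\<in>{i..<n - 1}. r (j + 1) * M ^ (j + 1 - i) * a (j + 2))"
    by (intro sum.cong) (auto simp: Suc_diff_le)
  finally have penalty: "(\<Sum>j\<in>{i..<n}. M ^ (j - i) * (if Suc j < n then M * (r (Suc j) * a (Suc (Suc j))) else 0))
      = (\<Sum>j\<in>{i..<n - 1}. r (j + 1) * M ^ (j + 1 - i) * a (j + 2))" .
  have prox: "(\<Sum>j\<in>{i..<n}. M ^ (j - i) * (a (Suc j) / e (Suc j)))
      = (\<Sum>j\<in>{i..<n}. M ^ (j - i) / e (j + 1) * a (j + 1))"
    by simp
  show ?thesis
    unfolding distrib_left sum.distrib geometric penalty prox by simp
qed

lemma prox_admm_multiplier_bound:
  fixes f :: "nat \<Rightarrow> 'a::euclidean_space \<Rightarrow> real" and \<phi> :: "'a \<Rightarrow> 'a"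
    and g :: "nat \<Rightarrow> 'a" and D :: "nat \<Rightarrow> 'a \<Rightarrow>\<^sub>L 'a"
  assumes admm: "prox_admm n f \<phi> \<rho> \<eta> x lam"
    and grad: "\<And>i. 0 < i \<Longrightarrow> i \<le> n \<Longrightarrow> (f i has_derivative (\<lambda>h. inner (g i) h)) (at (x (Suc k) i))"
    and deriv: "\<And>i. 0 < i \<Longrightarrow> i \<le> n \<Longrightarrow> (\<phi> has_derivative blinfun_apply (D i)) (at (x (Suc k) i))"
    and g_bound: "\<And>i. 0 < i \<Longrightarrow> i \<le> n \<Longrightarrow> norm (g i) \<le> Mf"
    and D_bound: "\<And>i. 0 < i \<Longrightarrow> i \<le> n \<Longrightarrow> norm (D i) \<le> M"
    and \<eta>_pos: "\<And>i. 0 < i \<Longrightarrow> i \<le> n \<Longrightarrow> 0 < \<eta> i"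
    and \<rho>_nonneg: "\<And>i. 0 < i \<Longrightarrow> i < n \<Longrightarrow> 0 \<le> \<rho> i"
    and "i < n"
  shows "norm (lam (Suc k) i) \<le> (\<Sum>l<n - i. M ^ l) * Mf
      + (\<Sum>j\<in>{i..<n - 1}. \<rho> (j + 1) * M ^ (j + 1 - i) * norm (x (Suc k) (j + 2) - x k (j + 2)))
      + (\<Sum>j\<in>{i..<n}. M ^ (j - i) / \<eta> (j + 1) * norm (x (Suc k) (j + 1) - x k (j + 1)))"
proof -
  define a where "a j = norm (x (Suc k) j - x k j)" for j
  \<comment> \<open>Setting u n = 0 makes the last step, which has no successor multiplier, an instance of the recurrence.\<close>
  define u where "u m = (if m < n then norm (lam (Suc k) m) else 0)" for m
  define c where "c j = Mf + a (Suc j) / \<eta> (Suc j)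
    + (if Suc j < n then M * (\<rho> (Suc j) * a (Suc (Suc j))) else 0)" for j
  have "0 \<le> M"
    using D_bound[of n] \<open>i < n\<close> norm_ge_zero[of "D n"] by linarith
  have recurrence: "u m \<le> c m + M * u (Suc m)" if "m < n" for m
  proof -
    have "norm (lam (Suc k) m) \<le> Mf + a (Suc m) / \<eta> (Suc m)
        + (if Suc m < n then M * (norm (lam (Suc k) (Suc m)) + \<rho> (Suc m) * a (Suc (Suc m))) else 0)"
      using prox_admm_multiplier_step[OF admm _ _ grad deriv g_bound D_bound \<eta>_pos \<rho>_nonneg, of "Suc m"] that
      unfolding a_def by simp
    then show ?thesis
      using that unfolding u_def c_def by (cases "Suc m < n") (simp_all add: distrib_left)
  qed
  have "norm (lam (Suc k) i) = u i"
    using \<open>i < n\<close> by (simp add: u_def)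
  also have "\<dots> \<le> (\<Sum>j\<in>{i..<n}. M ^ (j - i) * c j)"
    using backward_recurrence_bound[of n u c M i, OF recurrence \<open>0 \<le> M\<close>] \<open>i < n\<close> by (simp add: u_def)
  also have "\<dots> = (\<Sum>l<n - i. M ^ l) * Mf + (\<Sum>j\<in>{i..<n - 1}. \<rho> (j + 1) * M ^ (j + 1 - i) * a (j + 2))
      + (\<Sum>j\<in>{i..<n}. M ^ (j - i) / \<eta> (j + 1) * a (j + 1))"
    unfolding c_def by (rule sum_backward_weights_split)
  finally show ?thesis
    unfolding a_def .
qed

theorem lemma1:
  fixes n :: nat
    and f :: "nat \<Rightarrow> 'a::euclidean_space \<Rightarrow> real" and gf :: "nat \<Rightarrow> 'a \<Rightarrow> 'a"
    and \<phi> :: "'a \<Rightarrow> 'a" and D\<phi> :: "'a \<Rightarrow> 'a \<Rightarrow>\<^sub>L 'a"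
    and \<rho> \<eta> :: "nat \<Rightarrow> real"
    and x lam :: "nat \<Rightarrow> nat \<Rightarrow> 'a"
    and S :: "(nat \<Rightarrow> 'a) set"
    and Mf Lf C\<phi> M\<phi> L\<phi> :: real
    and k :: nat
  assumes n_pos: "n \<ge> 1"
    and f_grad: "\<And>i z. i \<le> n \<Longrightarrow> (f i has_derivative (\<lambda>h. inner (gf i z) h)) (at z)"
    and gf_cont: "\<And>i. i \<le> n \<Longrightarrow> continuous_on UNIV (gf i)"
    and \<phi>_deriv: "\<And>z. (\<phi> has_derivative blinfun_apply (D\<phi> z)) (at z)"
    and D\<phi>_cont: "continuous_on UNIV D\<phi>"
    and \<rho>_pos: "\<And>i. i < n \<Longrightarrow> \<rho> i > 0"
    and \<eta>_pos: "\<And>i. i \<le> n \<Longrightarrow> \<eta> i > 0"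
    and admm: "prox_admm n f \<phi> \<rho> \<eta> x lam"
    and S_compact: "compact S" and S_ext: "S \<subseteq> extensional {..n}"
    and consts_pos: "Mf > 0" "Lf > 0" "C\<phi> > 0" "M\<phi> > 0" "L\<phi> > 0"
    and A2: "\<And>u v i. u \<in> S \<Longrightarrow> v \<in> S \<Longrightarrow> i \<le> n \<Longrightarrow>
        norm (gf i (u i)) \<le> Mf \<and>
        norm (gf i (u i) - gf i (v i)) \<le> Lf * norm (u i - v i) \<and>
        norm (\<phi> (u i)) \<le> C\<phi> \<and>
        norm (D\<phi> (u i)) \<le> M\<phi> \<and>
        norm (D\<phi> (u i) - D\<phi> (v i)) \<le> L\<phi> * norm (u i - v i)"
    and in_S: "restrict (x (Suc k)) {..n} \<in> S"
  shows "\<forall>i<n. norm (lam (Suc k) i) \<le>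
      (\<Sum>l<n - i. M\<phi> ^ l) * Mf
      + (\<Sum>j\<in>{i..<n - 1}. \<rho> (j + 1) * M\<phi> ^ (j + 1 - i) * norm (x (Suc k) (j + 2) - x k (j + 2)))
      + (\<Sum>j\<in>{i..<n}. M\<phi> ^ (j - i) / \<eta> (j + 1) * norm (x (Suc k) (j + 1) - x k (j + 1)))"
proof (intro allI impI)
  fix i
  assume "i < n"
  have bounds: "norm (gf j (x (Suc k) j)) \<le> Mf" "norm (D\<phi> (x (Suc k) j)) \<le> M\<phi>" if "j \<le> n" for j
    using A2[OF in_S in_S that] that by simp_all
  show "norm (lam (Suc k) i) \<le> (\<Sum>l<n - i. M\<phi> ^ l) * Mf
      + (\<Sum>j\<in>{i..<n - 1}. \<rho> (j + 1) * M\<phi> ^ (j + 1 - i) * norm (x (Suc k) (j + 2) - x k (j + 2)))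
      + (\<Sum>j\<in>{i..<n}. M\<phi> ^ (j - i) / \<eta> (j + 1) * norm (x (Suc k) (j + 1) - x k (j + 1)))"
    by (rule prox_admm_multiplier_bound[where g = "\<lambda>j. gf j (x (Suc k) j)" and D = "\<lambda>j. D\<phi> (x (Suc k) j)"])
      (use admm f_grad \<phi>_deriv bounds \<eta>_pos \<rho>_pos \<open>i < n\<close> in \<open>auto intro: less_imp_le\<close>)
qed

end
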